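(* Let $V$ be a commutative unital quantale whose underlying lattice is a frame. If $(X,a,+)$ and $(Y,b,+)$ are $V$-groups and $f\colon X\to Y$ is a group homomorphism, then $f$ is a $V$-functor if and only if $a(0,x)\le b(0,f(x))$ for every $x\in X$.
   Context: A commutative unital quantale $V$ is a complete lattice with a commutative associative operation $\otimes$ with unit $k$ preserving arbitrary joins in each variable. A $V$-category $(X,a)$: $a\colon X\times X\to V$ with $k\le a(x,x)$ and $a(x,x')\otimes a(x',x'')\le a(x,x'')$. A $V$-functor $f\colon(X,a)\to(Y,b)$ satisfies $a(x,x')\le b(f(x),f(x'))$ for all $x,x'$. A $V$-group $(X,a,+)$ is a $V$-category with a group structure (additive, not necessarily abelian) such that $a(x_1,x_2)\otimes a(x_1',x_2')\le a(x_1+x_1',x_2+x_2')$. *)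

theory Defs
  imports Main
begin

definition comm_unital_quantale :: "('v::complete_lattice \<Rightarrow> 'v \<Rightarrow> 'v) \<Rightarrow> 'v \<Rightarrow> bool" where
  "comm_unital_quantale tns k \<longleftrightarrow>
     (\<forall>u v w. tns (tns u v) w = tns u (tns v w)) \<and>
     (\<forall>u v. tns u v = tns v u) \<and>
     (\<forall>u. tns k u = u \<and> tns u k = u) \<and>
     (\<forall>u S. tns u (Sup S) = Sup ((\<lambda>s. tns u s) ` S)) \<and>
     (\<forall>u S. tns (Sup S) u = Sup ((\<lambda>s. tns s u) ` S))"

definition is_frame :: "'v::complete_lattice itself \<Rightarrow> bool" where
  "is_frame _ \<longleftrightarrow> (\<forall>(u::'v) S. inf u (Sup S) = Sup ((\<lambda>s. inf u s) ` S))"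

definition V_category :: "('v::complete_lattice \<Rightarrow> 'v \<Rightarrow> 'v) \<Rightarrow> 'v \<Rightarrow> ('x \<Rightarrow> 'x \<Rightarrow> 'v) \<Rightarrow> bool" where
  "V_category tns k a \<longleftrightarrow>
     (\<forall>x. k \<le> a x x) \<and> (\<forall>x x' x''. tns (a x x') (a x' x'') \<le> a x x'')"

definition V_functor :: "('x \<Rightarrow> 'x \<Rightarrow> 'v::complete_lattice) \<Rightarrow> ('y \<Rightarrow> 'y \<Rightarrow> 'v) \<Rightarrow> ('x \<Rightarrow> 'y) \<Rightarrow> bool" where
  "V_functor a b f \<longleftrightarrow> (\<forall>x x'. a x x' \<le> b (f x) (f x'))"

definition V_group :: "('v::complete_lattice \<Rightarrow> 'v \<Rightarrow> 'v) \<Rightarrow> 'v \<Rightarrow> ('x::group_add \<Rightarrow> 'x \<Rightarrow> 'v) \<Rightarrow> bool" where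
  "V_group tns k a \<longleftrightarrow> V_category tns k a \<and>
     (\<forall>x1 x2 x1' x2'. tns (a x1 x2) (a x1' x2') \<le> a (x1 + x1') (x2 + x2'))"

definition group_hom :: "('x::group_add \<Rightarrow> 'y::group_add) \<Rightarrow> bool" where
  "group_hom f \<longleftrightarrow> (\<forall>x y. f (x + y) = f x + f y)"

end

theory Submission
  imports Defs
begin

text \<open>In a V-group the hom-object is invariant under left translation, so
\<open>a x x' = a 0 (-x + x')\<close>: every hom-object is one of the form \<open>a 0 z\<close>.
A homomorphism preserves this normal form, hence it suffices to check the
V-functor inequality at the source \<open>0\<close>.\<close>

lemma comm_unital_quantale_mono_left:
  fixes tns :: "'v::complete_lattice \<Rightarrow> 'v \<Rightarrow> 'v"
  assumes "comm_unital_quantale tns k" and "u \<le> v"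
  shows "tns u w \<le> tns v w"
proof -
  have "tns v w = tns (Sup {u, v}) w"
    using \<open>u \<le> v\<close> by (simp add: sup_absorb2)
  also have "\<dots> = sup (tns u w) (tns v w)"
    using assms(1) unfolding comm_unital_quantale_def
    by (metis (no_types) Sup_insert Sup_empty sup_bot_right image_insert image_empty)
  finally show ?thesis by (metis sup.cobounded1)
qed

lemma V_group_le_translate:
  assumes "comm_unital_quantale tns k" and "V_group tns k a"
  shows "a x x' \<le> a (y + x) (y + x')"
proof -
  have "a x x' = tns k (a x x')"
    using assms(1) unfolding comm_unital_quantale_def by simp
  also have "\<dots> \<le> tns (a y y) (a x x')"
    using assms unfolding V_group_def V_category_def
    by (blast intro: comm_unital_quantale_mono_left)
  also have "\<dots> \<le> a (y + x) (y + x')"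
    using assms(2) unfolding V_group_def by blast
  finally show ?thesis .
qed

lemma V_group_translate:
  assumes "comm_unital_quantale tns k" and "V_group tns k a"
  shows "a (y + x) (y + x') = a x x'"
proof (rule antisym)
  show "a (y + x) (y + x') \<le> a x x'"
    using V_group_le_translate[OF assms, of "y + x" "y + x'" "- y"]
    by (simp add: add.assoc[symmetric])
qed (rule V_group_le_translate[OF assms])

lemma V_group_eq_from_zero:
  assumes "comm_unital_quantale tns k" and "V_group tns k a"
  shows "a x x' = a 0 (- x + x')"
  using V_group_translate[OF assms, of "- x" x x'] by simp

lemma group_hom_zero: "group_hom f \<Longrightarrow> f 0 = 0"
  unfolding group_hom_def by (metis add.right_neutral add_left_cancel)

lemma group_hom_V_functor_iff:
  assumes "comm_unital_quantale tns k"
    and "V_group tns k a" and "V_group tns k b" and "group_hom f"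
  shows "V_functor a b f \<longleftrightarrow> (\<forall>x. a 0 x \<le> b 0 (f x))"
proof
  show "V_functor a b f \<Longrightarrow> \<forall>x. a 0 x \<le> b 0 (f x)"
    using group_hom_zero[OF assms(4)] unfolding V_functor_def by metis
next
  assume from_zero: "\<forall>x. a 0 x \<le> b 0 (f x)"
  show "V_functor a b f" unfolding V_functor_def
  proof (intro allI)
    fix x x'
    have f_shift: "f x + f (- x + x') = f x'"
      using assms(4) unfolding group_hom_def by (metis add_minus_cancel)
    have "a x x' = a 0 (- x + x')"
      by (rule V_group_eq_from_zero[OF assms(1,2)])
    also have "\<dots> \<le> b 0 (f (- x + x'))"
      using from_zero by blast
    also have "\<dots> = b (f x + 0) (f x + f (- x + x'))"
      by (rule V_group_translate[OF assms(1,3), symmetric])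
    also have "\<dots> = b (f x) (f x')"
      by (simp add: f_shift)
    finally show "a x x' \<le> b (f x) (f x')" .
  qed
qed

theorem corollary3p3:
  fixes tns :: "'v::complete_lattice \<Rightarrow> 'v \<Rightarrow> 'v" and k :: 'v
    and a :: "'x::group_add \<Rightarrow> 'x \<Rightarrow> 'v" and b :: "'y::group_add \<Rightarrow> 'y \<Rightarrow> 'v"
    and f :: "'x \<Rightarrow> 'y"
  assumes "comm_unital_quantale tns k"
    and "is_frame TYPE('v)"
    and "V_group tns k a"
    and "V_group tns k b"
    and "group_hom f"
  shows "V_functor a b f \<longleftrightarrow> (\<forall>x. a 0 x \<le> b 0 (f x))"
  using group_hom_V_functor_iff[OF assms(1,3,4,5)] .

end
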